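(* Consider the Single TFM with split parameter $z\in(0,1)$, all transactions of common size $s>0$, history $H$ with burning fee $r$, and a set $M_0$ of user transactions with $|M_0|=w>c_{block}$. Suppose all includers and the block producer follow the indicated allocation rules and add no fake transactions, producing block $B_k$. Then for every $t\in M_0\setminus B_k$ there is a bid $c'_t$ for $t$ such that, with all other transactions and bids unchanged and all parties following the indicated allocation rules without fake transactions, $t$ is included in at least one inclusion list and in the block.
   Context: Model: in one slot there are users, $m$ includers with distinct orders $1,\dots,m$ (order $1$ best), and one block producer. Each transaction has size $s$. Includers choose inclusion lists (at most $c_{Incl}$ transactions each); the block producer, seeing them, builds a block (at most $c_{block}$ transactions). Each transaction in the block pays burning fee $rs$. Block producer cost $\mu^{Cost}_{BP}\ge0$ and includer cost $\mu^{Cost}_{CM}\ge0$ per unit of size per included user transaction. Single TFM: the bid is a single nonnegative number $c_t$. Block producer fee $=\max\{\min\{\mu^{Cost}_{BP}s,\ c_ts-rs\}+\max\{c_ts-rs-\mu^{Cost}_{BP}s,0\}(1-z),\ 0\}$, paid when $t$ is in the block. Committee fee $=\max\{c_ts-rs-\mu^{Cost}_{BP}s,0\}\cdot z$, paid to the smallest-order includer listing $t$, only if $t$ is in the block. Indicated allocation rules. Block producer: among transactions with $c_t\ge r+\mu^{Cost}_{BP}$, include those with highest block producer fee (deterministic tie-breaking) until full. Includer of order $j$: compute the set $S$ the block producer would include; discard those with committee fee below $\mu^{Cost}_{CM}s$; sort the rest by committee fee decreasingly (deterministic tie-breaking); includer $j$ takes positions $(j-1)c_{Incl}+1,\dots,jc_{Incl}$.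 *)

theory Defs
  imports Complex_Main
begin

text \<open>Single TFM. Bids are one nonnegative real per transaction (c t).
  Fees are per transaction of size s, burning fee r, split parameter z.\<close>

definition bp_fee :: "real \<Rightarrow> real \<Rightarrow> real \<Rightarrow> real \<Rightarrow> real \<Rightarrow> real" where
  "bp_fee z muBP r s ct =
     max (min (muBP * s) (ct * s - r * s) + max (ct * s - r * s - muBP * s) 0 * (1 - z)) 0"

definition cm_fee :: "real \<Rightarrow> real \<Rightarrow> real \<Rightarrow> real \<Rightarrow> real \<Rightarrow> real" where
  "cm_fee z muBP r s ct = max (ct * s - r * s - muBP * s) 0 * z"

definition beats :: "('a \<Rightarrow> real) \<Rightarrow> ('a \<Rightarrow> nat) \<Rightarrow> 'a \<Rightarrow> 'a \<Rightarrow> bool" where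
  "beats key tb u t \<longleftrightarrow> key u > key t \<or> (key u = key t \<and> tb u < tb t)"

text \<open>Number of elements of A ranked strictly before t (so t is at position rank+1).\<close>
definition rank :: "'a set \<Rightarrow> ('a \<Rightarrow> real) \<Rightarrow> ('a \<Rightarrow> nat) \<Rightarrow> 'a \<Rightarrow> nat" where
  "rank A key tb t = card {u \<in> A. beats key tb u t}"

definition bp_block ::
  "real \<Rightarrow> real \<Rightarrow> real \<Rightarrow> real \<Rightarrow> nat \<Rightarrow> ('a \<Rightarrow> nat) \<Rightarrow> 'a set \<Rightarrow> ('a \<Rightarrow> real) \<Rightarrow> 'a set" where
  "bp_block z muBP r s cBlock tbBP M c =
     (let E = {t \<in> M. c t \<ge> r + muBP}
      in {t \<in> E. rank E (\<lambda>u. bp_fee z muBP r s (c u)) tbBP t < cBlock})"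

text \<open>Indicated rule for the includer of order j (1 \<le> j \<le> m): compute the block
  producer's set S, keep those with committee fee \<ge> muCM * s, sort by committee fee
  decreasingly and take positions (j-1)*cIncl+1, ..., j*cIncl.\<close>
definition incl_list ::
  "real \<Rightarrow> real \<Rightarrow> real \<Rightarrow> real \<Rightarrow> real \<Rightarrow> nat \<Rightarrow> nat \<Rightarrow> ('a \<Rightarrow> nat) \<Rightarrow> ('a \<Rightarrow> nat)
     \<Rightarrow> 'a set \<Rightarrow> ('a \<Rightarrow> real) \<Rightarrow> nat \<Rightarrow> 'a set" where
  "incl_list z muBP muCM r s cBlock cIncl tbBP tbCM M c j =
     (let S = bp_block z muBP r s cBlock tbBP M c;
          S' = {t \<in> S. cm_fee z muBP r s (c t) \<ge> muCM * s};
          key = (\<lambda>u. cm_fee z muBP r s (c u))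
      in {t \<in> S'. (j - 1) * cIncl \<le> rank S' key tbCM t \<and> rank S' key tbCM t < j * cIncl})"

end

theory Submission
  imports Defs
begin

text \<open>A transaction left out of the block can always be pushed in by raising its bid alone:
  once the bid exceeds every other bid, the threshold \<open>r + \<mu>\<^sub>B\<^sub>P\<close> of the block producer and the
  threshold \<open>r + \<mu>\<^sub>B\<^sub>P + \<mu>\<^sub>C\<^sub>M / z\<close> of the includers, both fees are strictly increasing in the
  bid, so the transaction is ranked first by the block producer and first by the includers,
  and the includer of order 1 lists it.\<close>

lemma bp_fee_above_threshold:
  assumes "z \<le> 1" "0 \<le> s" "0 \<le> muBP" "r + muBP \<le> y"
  shows "bp_fee z muBP r s y = muBP * s + (y - r - muBP) * s * (1 - z)"
proof -
  have split: "y * s - r * s = muBP * s + (y - r - muBP) * s"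
    by (simp add: algebra_simps)
  have "0 \<le> (y - r - muBP) * s" "0 \<le> (y - r - muBP) * s * (1 - z)" "0 \<le> muBP * s"
    using assms by simp_all
  then show ?thesis
    unfolding bp_fee_def split by (simp add: min_def max_def)
qed

lemma bp_fee_below_threshold_le:
  assumes "0 \<le> s" "0 \<le> muBP" "x \<le> r + muBP"
  shows "bp_fee z muBP r s x \<le> muBP * s"
proof -
  have "x * s - r * s - muBP * s = (x - r - muBP) * s"
    by (simp add: algebra_simps)
  also have "\<dots> \<le> 0"
    using assms by (simp add: mult_nonpos_nonneg)
  finally show ?thesis
    using assms unfolding bp_fee_def by simp
qed

lemma bp_fee_strict_mono:
  assumes "z < 1" "0 < s" "0 \<le> muBP" "x < y" "r + muBP < y"
  shows "bp_fee z muBP r s x < bp_fee z muBP r s y"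
proof -
  have fee_y: "bp_fee z muBP r s y = muBP * s + (y - r - muBP) * s * (1 - z)"
    using assms by (intro bp_fee_above_threshold) auto
  show ?thesis
  proof (cases "x \<le> r + muBP")
    case True
    then have "bp_fee z muBP r s x \<le> muBP * s"
      using assms by (intro bp_fee_below_threshold_le) auto
    also have "\<dots> < bp_fee z muBP r s y"
      unfolding fee_y using assms by simp
    finally show ?thesis .
  next
    case False
    then have "bp_fee z muBP r s x = muBP * s + (x - r - muBP) * s * (1 - z)"
      using assms by (intro bp_fee_above_threshold) auto
    moreover have "(x - r - muBP) * (s * (1 - z)) < (y - r - muBP) * (s * (1 - z))"
      using assms by (intro mult_strict_right_mono) auto
    ultimately show ?thesis
      unfolding fee_y by (simp add: mult.assoc)
  qed
qed

lemma cm_fee_above_threshold: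
  assumes "0 \<le> s" "r + muBP \<le> y"
  shows "cm_fee z muBP r s y = (y - r - muBP) * s * z"
proof -
  have "y * s - r * s - muBP * s = (y - r - muBP) * s"
    by (simp add: algebra_simps)
  then show ?thesis
    using assms unfolding cm_fee_def by simp
qed

lemma cm_fee_below_threshold:
  assumes "0 \<le> s" "x \<le> r + muBP"
  shows "cm_fee z muBP r s x = 0"
proof -
  have "x * s - r * s - muBP * s = (x - r - muBP) * s"
    by (simp add: algebra_simps)
  also have "\<dots> \<le> 0"
    using assms by (simp add: mult_nonpos_nonneg)
  finally show ?thesis
    unfolding cm_fee_def by simp
qed

lemma cm_fee_strict_mono:
  assumes "0 < z" "0 < s" "x < y" "r + muBP < y"
  shows "cm_fee z muBP r s x < cm_fee z muBP r s y"
proof -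
  have fee_y: "cm_fee z muBP r s y = (y - r - muBP) * s * z"
    using assms by (intro cm_fee_above_threshold) auto
  show ?thesis
  proof (cases "x \<le> r + muBP")
    case True
    then show ?thesis
      unfolding fee_y using assms by (simp add: cm_fee_below_threshold)
  next
    case False
    then have "cm_fee z muBP r s x = (x - r - muBP) * s * z"
      using assms by (intro cm_fee_above_threshold) auto
    moreover have "(x - r - muBP) * (s * z) < (y - r - muBP) * (s * z)"
      using assms by (intro mult_strict_right_mono) auto
    ultimately show ?thesis
      unfolding fee_y by (simp add: mult.assoc)
  qed
qed

lemma cm_fee_ge_threshold:
  assumes "0 < z" "0 \<le> s" "0 \<le> muCM" "r + muBP + muCM / z \<le> y"
  shows "muCM * s \<le> cm_fee z muBP r s y"
proof -
  have "0 \<le> muCM / z"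
    using assms by simp
  then have above: "r + muBP \<le> y"
    using assms(4) by linarith
  have "muCM / z \<le> y - r - muBP"
    using assms(4) by linarith
  then have "muCM \<le> (y - r - muBP) * z"
    using assms(1) by (simp add: pos_divide_le_eq)
  then have "muCM * s \<le> (y - r - muBP) * z * s"
    using assms(2) by (rule mult_right_mono)
  then show ?thesis
    using assms(2) above by (simp add: cm_fee_above_threshold mult.assoc mult.commute[of s])
qed

lemma rank_eq_0_if_strict_max:
  assumes "\<And>u. u \<in> A \<Longrightarrow> u \<noteq> t \<Longrightarrow> key u < key t"
  shows "rank A key tb t = 0"
proof -
  have "{u \<in> A. beats key tb u t} = {}"
    using assms by (force simp: beats_def)
  then show ?thesis
    unfolding rank_def by (simp only: card.empty)
qed

lemma bp_block_memI:
  assumes "1 \<le> cBlock" "t \<in> M" "r + muBP \<le> c t"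
    and "\<And>u. u \<in> M \<Longrightarrow> u \<noteq> t \<Longrightarrow> bp_fee z muBP r s (c u) < bp_fee z muBP r s (c t)"
  shows "t \<in> bp_block z muBP r s cBlock tbBP M c"
proof -
  let ?E = "{u \<in> M. r + muBP \<le> c u}"
  have "rank ?E (\<lambda>u. bp_fee z muBP r s (c u)) tbBP t = 0"
    using assms(4) by (intro rank_eq_0_if_strict_max) auto
  then show ?thesis
    using assms(1-3) by (simp add: bp_block_def)
qed

lemma incl_list_1_memI:
  assumes "1 \<le> cIncl" "t \<in> bp_block z muBP r s cBlock tbBP M c"
    and "muCM * s \<le> cm_fee z muBP r s (c t)"
    and "\<And>u. u \<in> M \<Longrightarrow> u \<noteq> t \<Longrightarrow> cm_fee z muBP r s (c u) < cm_fee z muBP r s (c t)"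
  shows "t \<in> incl_list z muBP muCM r s cBlock cIncl tbBP tbCM M c 1"
proof -
  let ?S = "{u \<in> bp_block z muBP r s cBlock tbBP M c. muCM * s \<le> cm_fee z muBP r s (c u)}"
  have "bp_block z muBP r s cBlock tbBP M c \<subseteq> M"
    by (auto simp: bp_block_def)
  then have "rank ?S (\<lambda>u. cm_fee z muBP r s (c u)) tbCM t = 0"
    using assms(4) by (intro rank_eq_0_if_strict_max) auto
  then show ?thesis
    using assms(1-3) by (simp add: incl_list_def Let_def)
qed

theorem mainTheorem4:
  fixes z muBP muCM r s :: real
    and m cBlock cIncl :: nat
    and tbBP tbCM :: "'a \<Rightarrow> nat"
    and M0 :: "'a set"
    and c :: "'a \<Rightarrow> real"
  assumes "0 < z" and "z < 1" and "0 < s" and "0 \<le> r"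
    and "0 \<le> muBP" and "0 \<le> muCM"
    and "1 \<le> m" and "1 \<le> cBlock" and "1 \<le> cIncl"
    and "inj_on tbBP M0" and "inj_on tbCM M0"
    and "finite M0" and "card M0 > cBlock"
    and "\<forall>u\<in>M0. 0 \<le> c u"
    and "t \<in> M0 - bp_block z muBP r s cBlock tbBP M0 c"
  shows "\<exists>c't. 0 \<le> c't \<and>
           (\<exists>j\<in>{1..m}. t \<in> incl_list z muBP muCM r s cBlock cIncl tbBP tbCM M0 (c(t := c't)) j) \<and>
           t \<in> bp_block z muBP r s cBlock tbBP M0 (c(t := c't))"
proof -
  \<comment> \<open>The outbidding is strict.\<close>
  define y where "y = Max (c ` M0) + r + muBP + muCM / z + 1"
  have t: "t \<in> M0"
    using assms by simp
  have bid_le_Max: "c u \<le> Max (c ` M0)" if "u \<in> M0" for u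
    using that assms by simp
  have "0 \<le> c t"
    using t assms by blast
  then have "0 \<le> Max (c ` M0)"
    using bid_le_Max[OF t] by linarith
  moreover have "0 \<le> muCM / z"
    using assms by simp
  ultimately have y_threshold: "0 \<le> y" "r + muBP < y" "r + muBP + muCM / z \<le> y"
    using assms unfolding y_def by linarith+
  have outbid: "c u < y" if "u \<in> M0" for u
    using bid_le_Max[OF that] \<open>0 \<le> muCM / z\<close> assms unfolding y_def by linarith
  have bp_outbid: "bp_fee z muBP r s (c u) < bp_fee z muBP r s y" if "u \<in> M0" for u
    using assms(2,3,5) outbid[OF that] y_threshold(2) by (rule bp_fee_strict_mono)
  have cm_outbid: "cm_fee z muBP r s (c u) < cm_fee z muBP r s y" if "u \<in> M0" for u
    using assms(1,3) outbid[OF that] y_threshold(2) by (rule cm_fee_strict_mono)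
  have cm_threshold: "muCM * s \<le> cm_fee z muBP r s y"
    using assms(1,3,6) y_threshold(3) by (intro cm_fee_ge_threshold) auto
  have in_block: "t \<in> bp_block z muBP r s cBlock tbBP M0 (c(t := y))"
    using assms(8) t y_threshold(2) bp_outbid by (intro bp_block_memI) auto
  then have "t \<in> incl_list z muBP muCM r s cBlock cIncl tbBP tbCM M0 (c(t := y)) 1"
    using assms(9) cm_threshold cm_outbid by (intro incl_list_1_memI) auto
  moreover have "1 \<in> {1..m}"
    using assms(7) by simp
  ultimately show ?thesis
    using y_threshold(1) in_block by blast
qed

end
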